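(* Let $r\ge 3$ and $n\ge 2r$, and let $M$ be a matroid of rank $r$ on a linearly ordered ground set $E$ of $n$ elements. Then $|\mathcal V(M)|\le\frac{1}{n-r+1}\binom{n}{r}$.
   Context: Graded lexicographic order on $2^E$: $X\prec Y$ if $|X|<|Y|$, or $|X|=|Y|$ and $\min(X\triangle Y)\in X$; $\min\mathcal X$ is the $\prec$-smallest member. $X$ is $k$-closed in $M$ if $\mathrm{cl}_M(Y)\subseteq X$ for all $Y\subseteq X$ with $|Y|\le k$; $\mathrm{cl}_k(X)$ is the intersection of all $k$-closed supersets of $X$ (so $\mathrm{cl}_{-1}(X)=X$). For a flat $F$ of rank $k$, $U^*_F=\min\{U:\mathrm{cl}_{k-1}(U)=F\}$; $\mathcal U^*_k=\{U^*_F: F\text{ a flat of rank }k,\ |U^*_F|>k\}$. $V\subseteq U$ is consecutive in $U$ if there are no $e,g\in V$, $f\in U\setminus V$ with $e<f<g$. For $U\in\mathcal U^*_k$, $\mathcal V(U)$ is the set of consecutive $(k+1)$-subsets of $U$; $\mathcal V_k=\bigcup_{U\in\mathcal U^*_k}\mathcal V(U)$ and $\mathcal V(M)=\bigcup_{k=0}^{r-1}\mathcal V_k$. *)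

theory Defs
  imports Complex_Main
begin

definition matroid :: "'a set \<Rightarrow> ('a set \<Rightarrow> bool) \<Rightarrow> bool" where
  "matroid E indep \<longleftrightarrow>
     finite E \<and>
     (\<forall>I. indep I \<longrightarrow> I \<subseteq> E) \<and>
     indep {} \<and>
     (\<forall>I J. indep J \<and> I \<subseteq> J \<longrightarrow> indep I) \<and>
     (\<forall>I J. indep I \<and> indep J \<and> card I < card J \<longrightarrow> (\<exists>e \<in> J - I. indep (insert e I)))"

definition mrank :: "('a set \<Rightarrow> bool) \<Rightarrow> 'a set \<Rightarrow> nat" where
  "mrank indep X = Max (card ` {I. I \<subseteq> X \<and> indep I})"

definition mcl :: "'a set \<Rightarrow> ('a set \<Rightarrow> bool) \<Rightarrow> 'a set \<Rightarrow> 'a set" where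
  "mcl E indep X = {e \<in> E. mrank indep (insert e X) = mrank indep X}"

definition flat :: "'a set \<Rightarrow> ('a set \<Rightarrow> bool) \<Rightarrow> 'a set \<Rightarrow> bool" where
  "flat E indep F \<longleftrightarrow> F \<subseteq> E \<and> mcl E indep F = F"

definition glex_less :: "'a::linorder set \<Rightarrow> 'a set \<Rightarrow> bool" where
  "glex_less X Y \<longleftrightarrow> card X < card Y \<or>
     (card X = card Y \<and> X \<noteq> Y \<and> Min ((X - Y) \<union> (Y - X)) \<in> X)"

definition glex_min :: "'a::linorder set set \<Rightarrow> 'a set" where
  "glex_min \<X> = (THE U. U \<in> \<X> \<and> (\<forall>V \<in> \<X>. V \<noteq> U \<longrightarrow> glex_less U V))"

text \<open>k-closed sets and the k-closure (k :: int, so that k = -1 is allowed).\<close>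

definition k_closed :: "'a set \<Rightarrow> ('a set \<Rightarrow> bool) \<Rightarrow> int \<Rightarrow> 'a set \<Rightarrow> bool" where
  "k_closed E indep k X \<longleftrightarrow>
     (\<forall>Y. Y \<subseteq> X \<and> int (card Y) \<le> k \<longrightarrow> mcl E indep Y \<subseteq> X)"

definition k_cl :: "'a set \<Rightarrow> ('a set \<Rightarrow> bool) \<Rightarrow> int \<Rightarrow> 'a set \<Rightarrow> 'a set" where
  "k_cl E indep k X = \<Inter> {Z. X \<subseteq> Z \<and> Z \<subseteq> E \<and> k_closed E indep k Z}"

definition Ustar :: "'a::linorder set \<Rightarrow> ('a set \<Rightarrow> bool) \<Rightarrow> 'a set \<Rightarrow> 'a set" where
  "Ustar E indep F =
     glex_min {U. U \<subseteq> E \<and> k_cl E indep (int (mrank indep F) - 1) U = F}"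

definition Ustar_family :: "'a::linorder set \<Rightarrow> ('a set \<Rightarrow> bool) \<Rightarrow> nat \<Rightarrow> 'a set set" where
  "Ustar_family E indep k =
     {Ustar E indep F | F. flat E indep F \<and> mrank indep F = k \<and> card (Ustar E indep F) > k}"

definition consecutive :: "'a::linorder set \<Rightarrow> 'a set \<Rightarrow> bool" where
  "consecutive V U \<longleftrightarrow> V \<subseteq> U \<and>
     \<not> (\<exists>e \<in> V. \<exists>g \<in> V. \<exists>f \<in> U - V. e < f \<and> f < g)"

definition V_of :: "nat \<Rightarrow> 'a::linorder set \<Rightarrow> 'a set set" where
  "V_of k U = {V. consecutive V U \<and> card V = k + 1}"

definition V_k :: "'a::linorder set \<Rightarrow> ('a set \<Rightarrow> bool) \<Rightarrow> nat \<Rightarrow> 'a set set" where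
  "V_k E indep k = (\<Union>U \<in> Ustar_family E indep k. V_of k U)"

definition V_M :: "'a::linorder set \<Rightarrow> ('a set \<Rightarrow> bool) \<Rightarrow> 'a set set" where
  "V_M E indep = (\<Union>k < mrank indep E. V_k E indep k)"

end

theory Submission
  imports Defs
begin

text \<open>
  Every (k+1)-element consecutive subset of a set U is determined by its least element, and that
  element has at least k larger elements in U, so |V(U)| \<le> |U| - k. The sets U*_F of a fixed rank k
  share no k-subset, since every k-subset of U*_F is a basis of F. Moreover a k-subset S of U*_F that
  is not an initial segment of U*_F lies in no U*_H with rank H > k: exchanging some y \<in> S for a
  smaller x \<in> U*_F - S would produce a graded-lexicographically smaller set with the same closure as
  U*_H. Hence, calling an m-set covered when it lies in some U*_F with rank F \<ge> m, the m-sets that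
  become uncovered when passing from rank \<ge> m to rank \<ge> m + 1 number at least
  \<Sum> (C(|U|,m) - 1) over U \<in> U*_m. Propagating upwards with the local LYM inequality gives
  (m + 1) \<Sum>_{k<m} |V_k| \<le> #(uncovered m-sets) for 2 \<le> m \<le> r - 1, while the covered (r-1)-sets
  number at least r |V_{r-1}|. Together r |V(M)| \<le> C(n, r-1) = r C(n,r) / (n - r + 1).
\<close>

section \<open>k-closure\<close>

lemma k_closed_ground: "k_closed E indep k E"
  unfolding k_closed_def mcl_def by auto

lemma subset_k_cl: "X \<subseteq> E \<Longrightarrow> X \<subseteq> k_cl E indep k X"
  unfolding k_cl_def by auto

lemma k_cl_subset_ground: "X \<subseteq> E \<Longrightarrow> k_cl E indep k X \<subseteq> E"
  unfolding k_cl_def using k_closed_ground[of E indep k] by auto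

lemma k_cl_least: "Z \<subseteq> E \<Longrightarrow> X \<subseteq> Z \<Longrightarrow> k_closed E indep k Z \<Longrightarrow> k_cl E indep k X \<subseteq> Z"
  unfolding k_cl_def by auto

lemma k_closed_k_cl: "k_closed E indep k (k_cl E indep k X)"
proof (unfold k_closed_def, intro allI impI)
  fix Y assume Y: "Y \<subseteq> k_cl E indep k X \<and> int (card Y) \<le> k"
  show "mcl E indep Y \<subseteq> k_cl E indep k X"
    unfolding k_cl_def
  proof (rule Inter_greatest)
    fix Z assume Z: "Z \<in> {Z. X \<subseteq> Z \<and> Z \<subseteq> E \<and> k_closed E indep k Z}"
    then have "k_cl E indep k X \<subseteq> Z" unfolding k_cl_def by (intro Inter_lower)
    then have "Y \<subseteq> Z" using Y by auto
    then show "mcl E indep Y \<subseteq> Z" using Z Y unfolding k_closed_def by auto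
  qed
qed

lemma cl_subset_k_cl:
  "Y \<subseteq> k_cl E indep k X \<Longrightarrow> int (card Y) \<le> k \<Longrightarrow> mcl E indep Y \<subseteq> k_cl E indep k X"
  using k_closed_k_cl[of E indep k X] unfolding k_closed_def by blast

lemma k_cl_subset_k_cl:
  "X' \<subseteq> E \<Longrightarrow> X \<subseteq> k_cl E indep k X' \<Longrightarrow> k_cl E indep k X \<subseteq> k_cl E indep k X'"
  by (rule k_cl_least[OF k_cl_subset_ground _ k_closed_k_cl])

lemma k_cl_mono: "X' \<subseteq> E \<Longrightarrow> X \<subseteq> X' \<Longrightarrow> k_cl E indep k X \<subseteq> k_cl E indep k X'"
  by (metis k_cl_subset_k_cl subset_k_cl order_trans)

lemma k_cl_insert_spanned:
  assumes "X \<subseteq> E" "T \<subseteq> X" "int (card T) \<le> k" "y \<in> mcl E indep T"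
  shows "k_cl E indep k (insert y X) = k_cl E indep k X"
proof
  have "y \<in> k_cl E indep k X"
    using cl_subset_k_cl[of T E indep k X] assms subset_k_cl[OF assms(1)] by blast
  then have "insert y X \<subseteq> k_cl E indep k X" using subset_k_cl[OF assms(1)] by blast
  then show "k_cl E indep k (insert y X) \<subseteq> k_cl E indep k X"
    using k_cl_subset_k_cl[OF assms(1)] by blast
  have "y \<in> E" using assms(4) unfolding mcl_def by blast
  then show "k_cl E indep k X \<subseteq> k_cl E indep k (insert y X)"
    using k_cl_mono[of "insert y X" E X] assms(1) by blast
qed

section \<open>Finite matroids\<close>

locale finite_matroid =
  fixes E :: "'a set" and indep :: "'a set \<Rightarrow> bool"
  assumes matroid: "matroid E indep"
begin

lemma finite_ground: "finite E"
  using matroid unfolding matroid_def by blast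

lemma indep_subset_ground: "indep I \<Longrightarrow> I \<subseteq> E"
  using matroid unfolding matroid_def by blast

lemma indep_empty: "indep {}"
  using matroid unfolding matroid_def by blast

lemma indep_subset: "indep J \<Longrightarrow> I \<subseteq> J \<Longrightarrow> indep I"
  using matroid unfolding matroid_def by blast

lemma indep_augment: "indep I \<Longrightarrow> indep J \<Longrightarrow> card I < card J \<Longrightarrow> \<exists>e \<in> J - I. indep (insert e I)"
  using matroid unfolding matroid_def by blast

lemma finite_subset_ground: "X \<subseteq> E \<Longrightarrow> finite X"
  using finite_ground finite_subset by blast

lemma indep_finite: "indep I \<Longrightarrow> finite I"
  using indep_subset_ground finite_subset_ground by blast

lemma finite_indep_card_image: "finite (card ` {I. I \<subseteq> X \<and> indep I})"
proof -
  have "{I. I \<subseteq> X \<and> indep I} \<subseteq> Pow E" using indep_subset_ground by blast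
  then show ?thesis using finite_ground by (meson finite_Pow_iff finite_imageI finite_subset)
qed

lemma card_indep_le_rank: "indep I \<Longrightarrow> I \<subseteq> X \<Longrightarrow> card I \<le> mrank indep X"
  unfolding mrank_def using finite_indep_card_image by (intro Max_ge) auto

lemma rank_attained:
  obtains I where "I \<subseteq> X" "indep I" "card I = mrank indep X"
proof -
  have "card ` {I. I \<subseteq> X \<and> indep I} \<noteq> {}" using indep_empty by blast
  then have "mrank indep X \<in> card ` {I. I \<subseteq> X \<and> indep I}"
    unfolding mrank_def by (intro Max_in finite_indep_card_image)
  then show thesis using that by auto
qed

lemma rank_mono: "X \<subseteq> Y \<Longrightarrow> mrank indep X \<le> mrank indep Y"
proof -
  assume "X \<subseteq> Y"
  obtain I where "I \<subseteq> X" "indep I" "card I = mrank indep X" by (rule rank_attained)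
  then show ?thesis using card_indep_le_rank[of I Y] \<open>X \<subseteq> Y\<close> by auto
qed

lemma rank_indep: "indep I \<Longrightarrow> mrank indep I = card I"
proof -
  assume I: "indep I"
  obtain J where "J \<subseteq> I" "card J = mrank indep I" by (rule rank_attained)
  then have "mrank indep I \<le> card I" using card_mono[OF indep_finite[OF I]] by metis
  then show ?thesis using card_indep_le_rank[OF I order.refl] by (rule antisym)
qed

lemma indep_extend_to_basis:
  "indep J \<Longrightarrow> J \<subseteq> X \<Longrightarrow> \<exists>I. J \<subseteq> I \<and> I \<subseteq> X \<and> indep I \<and> card I = mrank indep X"
proof (induction "mrank indep X - card J" arbitrary: J rule: less_induct)
  case less
  show ?case
  proof (cases "card J < mrank indep X")
    case True
    obtain I where I: "I \<subseteq> X" "indep I" "card I = mrank indep X" by (rule rank_attained)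
    then obtain e where e: "e \<in> I - J" "indep (insert e J)"
      using indep_augment[of J I] less True by auto
    have "card (insert e J) = Suc (card J)" using e indep_finite[OF less(2)] by auto
    then have "mrank indep X - card (insert e J) < mrank indep X - card J" using True by auto
    then obtain I' where "insert e J \<subseteq> I'" "I' \<subseteq> X" "indep I'" "card I' = mrank indep X"
      using less(1)[of "insert e J"] e I less by auto
    then show ?thesis by auto
  next
    case False
    then show ?thesis using card_indep_le_rank[of J X] less by (intro exI[of _ J]) auto
  qed
qed

lemma dependent_spans_own_element:
  assumes "Y \<subseteq> E" "\<not> indep Y"
  shows "\<exists>y\<in>Y. y \<in> mcl E indep (Y - {y})"
proof -
  obtain I where I: "I \<subseteq> Y" "indep I" "card I = mrank indep Y" by (rule rank_attained)
  then have "I \<noteq> Y" using assms by auto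
  then obtain y where y: "y \<in> Y" "y \<notin> I" using I by blast
  have "I \<subseteq> Y - {y}" using I y by auto
  then have "card I \<le> mrank indep (Y - {y})" using card_indep_le_rank I by blast
  moreover have "mrank indep (Y - {y}) \<le> mrank indep Y" by (rule rank_mono) auto
  moreover have "insert y (Y - {y}) = Y" using y by auto
  ultimately have "mrank indep (insert y (Y - {y})) = mrank indep (Y - {y})" using I by auto
  then show ?thesis unfolding mcl_def using y assms by auto
qed

lemma cl_mono:
  assumes "Y \<subseteq> X"
  shows "mcl E indep Y \<subseteq> mcl E indep X"
proof
  fix x assume "x \<in> mcl E indep Y"
  then have xE: "x \<in> E" and eq: "mrank indep (insert x Y) = mrank indep Y"
    unfolding mcl_def by auto
  obtain I where I: "I \<subseteq> Y" "indep I" "card I = mrank indep Y" by (rule rank_attained)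
  obtain J where J: "I \<subseteq> J" "J \<subseteq> X" "indep J" "card J = mrank indep X"
    using indep_extend_to_basis[of I X] I assms by auto
  have "mrank indep (insert x X) \<le> mrank indep X"
  proof (rule ccontr)
    assume "\<not> ?thesis"
    then have lt: "card J < mrank indep (insert x X)" using J by auto
    obtain K where K: "K \<subseteq> insert x X" "indep K" "card K = mrank indep (insert x X)"
      by (rule rank_attained)
    then obtain e where e: "e \<in> K - J" "indep (insert e J)"
      using indep_augment[of J K] J lt by auto
    have fJ: "finite J" using J indep_finite by auto
    show False
    proof (cases "e \<in> X")
      case True
      then have "card (insert e J) \<le> mrank indep X"
        using card_indep_le_rank[of "insert e J" X] e J by auto
      then show False using e fJ J by auto
    next
      case False
      then have ex: "e = x" using e K by auto
      have "indep (insert x I)" using e ex J indep_subset by (metis insert_mono)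
      moreover have "x \<notin> I" using e ex J by auto
      moreover have "finite I" using I indep_finite by auto
      ultimately have "card (insert x I) \<le> mrank indep (insert x Y)"
        using card_indep_le_rank[of "insert x I" "insert x Y"] I by auto
      then show False using eq I \<open>x \<notin> I\<close> \<open>finite I\<close> by auto
    qed
  qed
  moreover have "mrank indep X \<le> mrank indep (insert x X)" by (rule rank_mono) auto
  ultimately show "x \<in> mcl E indep X" unfolding mcl_def using xE by auto
qed

lemma flat_cl_subset: "flat E indep F \<Longrightarrow> Y \<subseteq> F \<Longrightarrow> mcl E indep Y \<subseteq> F"
  using cl_mono[of Y F] unfolding flat_def by simp

lemma flat_eq_cl_of_basis:
  assumes "flat E indep G" "S \<subseteq> G" "indep S" "card S = mrank indep G"
  shows "mcl E indep S = G"
proof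
  show "mcl E indep S \<subseteq> G" using flat_cl_subset assms by blast
  show "G \<subseteq> mcl E indep S"
  proof
    fix z assume z: "z \<in> G"
    have "mrank indep (insert z S) \<le> mrank indep G" using z assms by (intro rank_mono) auto
    moreover have "mrank indep S \<le> mrank indep (insert z S)" by (rule rank_mono) auto
    ultimately have "mrank indep (insert z S) = mrank indep S" using rank_indep assms by auto
    then show "z \<in> mcl E indep S" unfolding mcl_def using z assms(1) unfolding flat_def by auto
  qed
qed

lemma flat_k_closed: "flat E indep F \<Longrightarrow> k_closed E indep k F"
  unfolding k_closed_def using flat_cl_subset by simp

lemma k_cl_flat: "flat E indep F \<Longrightarrow> k_cl E indep k F = F"
  by (meson antisym flat_def flat_k_closed k_cl_least order_refl subset_k_cl)

end

section \<open>Graded lexicographic order\<close>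

lemma agree_below_Min_sym_diff:
  fixes X Y :: "'a::linorder set"
  assumes "finite X" "finite Y" "t < Min ((X - Y) \<union> (Y - X))"
  shows "t \<in> X \<longleftrightarrow> t \<in> Y"
  using assms Min_le[of "(X - Y) \<union> (Y - X)" t] by (auto simp: not_le[symmetric])

lemma Min_sym_diff_eqI:
  fixes X Y :: "'a::linorder set"
  assumes "finite X" "finite Y" "a \<in> (X - Y) \<union> (Y - X)" "\<And>t. t < a \<Longrightarrow> t \<in> X \<longleftrightarrow> t \<in> Y"
  shows "Min ((X - Y) \<union> (Y - X)) = a"
  using assms by (intro Min_eqI) (auto simp: not_less[symmetric])

lemma Min_sym_diff_in:
  fixes X Y :: "'a::linorder set"
  assumes "finite X" "finite Y" "X \<noteq> Y"
  shows "Min ((X - Y) \<union> (Y - X)) \<in> (X - Y) \<union> (Y - X)"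
  using assms by (intro Min_in) auto

lemma glex_less_asym: "finite X \<Longrightarrow> finite Y \<Longrightarrow> glex_less X Y \<Longrightarrow> \<not> glex_less Y X"
  unfolding glex_less_def using Min_sym_diff_in[of X Y] by (auto simp: Un_commute)

lemma glex_less_of_card_less: "card X < card Y \<Longrightarrow> glex_less X Y"
  unfolding glex_less_def by auto

lemma glex_less_total: "finite X \<Longrightarrow> finite Y \<Longrightarrow> X \<noteq> Y \<Longrightarrow> glex_less X Y \<or> glex_less Y X"
  unfolding glex_less_def using Min_sym_diff_in[of X Y] by (auto simp: Un_commute)

lemma glex_less_trans:
  fixes X Y Z :: "'a::linorder set"
  assumes fin: "finite X" "finite Y" "finite Z" and xy: "glex_less X Y" and yz: "glex_less Y Z"
  shows "glex_less X Z"
proof (cases "card X = card Y \<and> card Y = card Z")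
  case False
  then show ?thesis using xy yz unfolding glex_less_def by auto
next
  case True
  define a where "a = Min ((X - Y) \<union> (Y - X))"
  define b where "b = Min ((Y - Z) \<union> (Z - Y))"
  have "X \<noteq> Y" "Y \<noteq> Z" using xy yz True unfolding glex_less_def by auto
  then have a: "a \<in> X" "a \<notin> Y" and b: "b \<in> Y" "b \<notin> Z"
    using xy yz True Min_sym_diff_in[of X Y] Min_sym_diff_in[of Y Z] fin
    unfolding glex_less_def a_def b_def by auto
  have below_a: "t \<in> X \<longleftrightarrow> t \<in> Y" if "t < a" for t
    using agree_below_Min_sym_diff fin that unfolding a_def by blast
  have below_b: "t \<in> Y \<longleftrightarrow> t \<in> Z" if "t < b" for t
    using agree_below_Min_sym_diff fin that unfolding b_def by blast
  have "a \<noteq> b" using a b by auto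
  then consider "a < b" | "b < a" by (blast elim: linorder_neqE)
  then show ?thesis
  proof cases
    case 1
    have "t \<in> X \<longleftrightarrow> t \<in> Z" if "t < a" for t using below_a[OF that] below_b[of t] that 1 by auto
    then have "Min ((X - Z) \<union> (Z - X)) = a"
      using a below_b[OF 1] fin by (intro Min_sym_diff_eqI) auto
    then show ?thesis unfolding glex_less_def using True a below_b[OF 1] by auto
  next
    case 2
    have "t \<in> X \<longleftrightarrow> t \<in> Z" if "t < b" for t using below_a[of t] below_b[OF that] that 2 by auto
    then have "Min ((X - Z) \<union> (Z - X)) = b"
      using b below_a[OF 2] fin by (intro Min_sym_diff_eqI) auto
    then show ?thesis unfolding glex_less_def using True b below_a[OF 2] by auto
  qed
qed

lemma glex_least_exists:
  assumes "finite \<X>" "\<X> \<noteq> {}" "\<forall>X\<in>\<X>. finite X"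
  shows "\<exists>U\<in>\<X>. \<forall>V\<in>\<X>. V \<noteq> U \<longrightarrow> glex_less U V"
  using assms
proof (induction rule: finite_ne_induct)
  case (singleton x)
  then show ?case by auto
next
  case (insert x F)
  obtain U where U: "U \<in> F" "\<forall>V\<in>F. V \<noteq> U \<longrightarrow> glex_less U V"
    using insert.IH insert.prems by auto
  have fin: "finite U" "finite x" using insert.prems U by auto
  show ?case
  proof (cases "glex_less x U")
    case True
    have "glex_less x V" if "V \<in> F" for V
    proof (cases "V = U")
      case False
      then show ?thesis
        using glex_less_trans[of x U V] True U that fin insert.prems by auto
    qed (use True in simp)
    then have "\<forall>V\<in>insert x F. V \<noteq> x \<longrightarrow> glex_less x V" by auto
    then show ?thesis by blast
  next
    case False
    then have "glex_less U x" using glex_less_total[of x U] fin insert.hyps U by auto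
    then show ?thesis using U by auto
  qed
qed

lemma glex_min_least:
  assumes "finite \<X>" "\<X> \<noteq> {}" "\<forall>X\<in>\<X>. finite X"
  shows "glex_min \<X> \<in> \<X>" "\<And>V. V \<in> \<X> \<Longrightarrow> V \<noteq> glex_min \<X> \<Longrightarrow> glex_less (glex_min \<X>) V"
proof -
  obtain U where U: "U \<in> \<X>" "\<forall>V\<in>\<X>. V \<noteq> U \<longrightarrow> glex_less U V"
    using glex_least_exists[OF assms] by blast
  have "glex_min \<X> = U" unfolding glex_min_def
  proof (rule the_equality)
    show "U \<in> \<X> \<and> (\<forall>V\<in>\<X>. V \<noteq> U \<longrightarrow> glex_less U V)" using U by auto
    fix W assume W: "W \<in> \<X> \<and> (\<forall>V\<in>\<X>. V \<noteq> W \<longrightarrow> glex_less W V)"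
    show "W = U"
    proof (rule ccontr)
      assume "W \<noteq> U"
      then have "glex_less W U" "glex_less U W" using W U by auto
      moreover have "finite W" "finite U" using W U assms(3) by auto
      ultimately show False using glex_less_asym by blast
    qed
  qed
  with U show "glex_min \<X> \<in> \<X>" "\<And>V. V \<in> \<X> \<Longrightarrow> V \<noteq> glex_min \<X> \<Longrightarrow> glex_less (glex_min \<X>) V"
    by auto
qed

lemma glex_less_exchange:
  fixes W :: "'a::linorder set"
  assumes "finite W" "y \<in> W" "x \<notin> W" "x < y"
  shows "glex_less (insert x (W - {y})) W"
proof -
  let ?W' = "insert x (W - {y})"
  have "?W' - W = {x}" "W - ?W' = {y}" using assms by auto
  moreover have "card ?W' = card W"
    using assms card_Suc_Diff1[of W y] by (simp add: card_insert_disjoint)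
  ultimately show ?thesis unfolding glex_less_def using assms by auto
qed

section \<open>The minimal generating sets U*_F\<close>

locale ordered_matroid = finite_matroid E indep for E :: "'a::linorder set" and indep
begin

lemma Ustar_glex_least:
  assumes "flat E indep F"
  defines "\<X> \<equiv> {U. U \<subseteq> E \<and> k_cl E indep (int (mrank indep F) - 1) U = F}"
  shows "Ustar E indep F \<in> \<X>" "\<And>V. V \<in> \<X> \<Longrightarrow> V \<noteq> Ustar E indep F \<Longrightarrow> glex_less (Ustar E indep F) V"
proof -
  have "\<X> \<subseteq> Pow E" unfolding \<X>_def by auto
  then have "finite \<X>" using finite_ground finite_subset by blast
  moreover have "F \<in> \<X>" using assms k_cl_flat unfolding \<X>_def flat_def by auto
  moreover have "\<forall>X\<in>\<X>. finite X" unfolding \<X>_def using finite_subset_ground by blast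
  ultimately show "Ustar E indep F \<in> \<X>" "\<And>V. V \<in> \<X> \<Longrightarrow> V \<noteq> Ustar E indep F \<Longrightarrow> glex_less (Ustar E indep F) V"
    unfolding Ustar_def \<X>_def[symmetric] using glex_min_least[of \<X>] by auto
qed

lemma Ustar_subset_ground: "flat E indep F \<Longrightarrow> Ustar E indep F \<subseteq> E"
  using Ustar_glex_least(1) by blast

lemma k_cl_Ustar: "flat E indep F \<Longrightarrow> k_cl E indep (int (mrank indep F) - 1) (Ustar E indep F) = F"
  using Ustar_glex_least(1) by blast

lemma Ustar_subset_flat: "flat E indep F \<Longrightarrow> Ustar E indep F \<subseteq> F"
  using k_cl_Ustar Ustar_subset_ground subset_k_cl by metis

lemma finite_Ustar: "flat E indep F \<Longrightarrow> finite (Ustar E indep F)"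
  using Ustar_subset_ground finite_subset_ground by blast

lemma Ustar_glex_minimal:
  assumes "flat E indep F" "U \<subseteq> E" "k_cl E indep (int (mrank indep F) - 1) U = F"
  shows "\<not> glex_less U (Ustar E indep F)"
proof
  assume less: "glex_less U (Ustar E indep F)"
  then have "U \<noteq> Ustar E indep F" unfolding glex_less_def by auto
  then have "glex_less (Ustar E indep F) U" using Ustar_glex_least(2)[OF assms(1)] assms by blast
  then show False
    using glex_less_asym less finite_Ustar[OF assms(1)] finite_subset_ground[OF assms(2)] by blast
qed

lemma Ustar_small_subsets_indep:
  assumes F: "flat E indep F" and Y: "Y \<subseteq> Ustar E indep F" "card Y \<le> mrank indep F"
  shows "indep Y"
proof (rule ccontr)
  assume "\<not> indep Y"
  define U where "U = Ustar E indep F"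
  define k where "k = int (mrank indep F) - 1"
  have UE: "U \<subseteq> E" unfolding U_def using Ustar_subset_ground[OF F] .
  obtain y where y: "y \<in> Y" "y \<in> mcl E indep (Y - {y})"
    using dependent_spans_own_element \<open>\<not> indep Y\<close> Y UE unfolding U_def by blast
  have "card (Y - {y}) = card Y - 1" "card Y \<ge> 1"
    using y finite_subset_ground[of Y] Y UE unfolding U_def by (auto simp: Suc_le_eq card_gt_0_iff)
  then have "int (card (Y - {y})) \<le> k" using Y unfolding k_def by auto
  then have "k_cl E indep k (insert y (U - {y})) = k_cl E indep k (U - {y})"
    using y Y UE unfolding U_def by (intro k_cl_insert_spanned) auto
  moreover have "insert y (U - {y}) = U" using y Y unfolding U_def by auto
  ultimately have "k_cl E indep k (U - {y}) = F" using k_cl_Ustar[OF F] unfolding U_def k_def by simp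
  moreover have "glex_less (U - {y}) U"
    using y Y finite_Ustar[OF F] unfolding U_def by (intro glex_less_of_card_less card_Diff1_less) auto
  moreover have "U - {y} \<subseteq> E" using UE by auto
  ultimately show False using Ustar_glex_minimal[OF F, folded U_def k_def] by blast
qed

lemma Ustar_spans:
  assumes G: "flat E indep G" and S: "S \<subseteq> Ustar E indep G" "card S = mrank indep G"
  shows "mcl E indep S = G"
  using flat_eq_cl_of_basis[OF G] Ustar_small_subsets_indep[OF G S(1)] Ustar_subset_flat[OF G] S
  by auto

lemma k_cl_Ustar_exchange:
  assumes G: "flat E indep G" and S: "S \<subseteq> Ustar E indep G" "card S = mrank indep G"
    and x: "x \<in> Ustar E indep G" "x \<notin> S" and y: "y \<in> S"
    and H: "flat E indep H" and GH: "mrank indep G < mrank indep H" and SW: "S \<subseteq> Ustar E indep H"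
  shows "k_cl E indep (int (mrank indep H) - 1) (insert x (Ustar E indep H - {y})) = H"
proof -
  define W where "W = Ustar E indep H"
  define k where "k = int (mrank indep H) - 1"
  define U' where "U' = insert x (W - {y})"
  have WE: "W \<subseteq> E" and WH: "W \<subseteq> H"
    unfolding W_def using Ustar_subset_ground[OF H] Ustar_subset_flat[OF H] by auto
  have HE: "H \<subseteq> E" using H unfolding flat_def by auto
  have finS: "finite S" using S(1) Ustar_subset_ground[OF G] finite_subset_ground by blast
  have "G = mcl E indep S" using Ustar_spans[OF G S] by simp
  also have "\<dots> \<subseteq> H" using flat_cl_subset[OF H] SW WH unfolding W_def by auto
  finally have "x \<in> H" using x Ustar_subset_flat[OF G] by auto
  then have U'H: "U' \<subseteq> H" and U'E: "U' \<subseteq> E" unfolding U'_def using WH HE by auto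
  define T where "T = insert x (S - {y})"
  have "T \<subseteq> U'" unfolding T_def U'_def W_def using SW x(2) y by auto
  moreover have cT: "card T = mrank indep G"
  proof -
    have "card T = Suc (card (S - {y}))" using finS x(2) unfolding T_def by simp
    also have "\<dots> = card S" by (rule card_Suc_Diff1[OF finS y])
    finally show ?thesis using S(2) by simp
  qed
  moreover have "mcl E indep T = G" using Ustar_spans[OF G _ cT] x S unfolding T_def by auto
  ultimately have spanned: "k_cl E indep k (insert y U') = k_cl E indep k U'"
    using y S Ustar_subset_flat[OF G] GH U'E unfolding k_def by (intro k_cl_insert_spanned) auto
  have "insert y U' \<subseteq> E" using U'E WE y SW unfolding W_def by auto
  moreover have "W \<subseteq> insert y U'" unfolding U'_def by auto
  ultimately have "k_cl E indep k W \<subseteq> k_cl E indep k (insert y U')" by (rule k_cl_mono)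
  then have "H \<subseteq> k_cl E indep k U'" using spanned k_cl_Ustar[OF H, folded W_def k_def] by simp
  moreover have "k_cl E indep k U' \<subseteq> H"
    using k_cl_mono[OF HE U'H, of indep k] k_cl_flat[OF H, of k] by simp
  ultimately show ?thesis unfolding U'_def W_def k_def by simp
qed

lemma Ustar_exchange:
  assumes G: "flat E indep G" and S: "S \<subseteq> Ustar E indep G" "card S = mrank indep G"
    and x: "x \<in> Ustar E indep G" "x \<notin> S" and y: "y \<in> S" and xy: "x < y"
    and H: "flat E indep H" and GH: "mrank indep G < mrank indep H"
  shows "\<not> S \<subseteq> Ustar E indep H"
proof
  assume SW: "S \<subseteq> Ustar E indep H"
  have finS: "finite S" using S(1) Ustar_subset_ground[OF G] finite_subset_ground by blast
  have "x \<notin> Ustar E indep H"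
  proof
    assume "x \<in> Ustar E indep H"
    then have "indep (insert x S)"
      using SW GH S(2) finS x(2) by (intro Ustar_small_subsets_indep[OF H]) auto
    moreover have "insert x S \<subseteq> G" using x S Ustar_subset_flat[OF G] by auto
    ultimately have "card (insert x S) \<le> mrank indep G" by (rule card_indep_le_rank)
    then show False using S(2) finS x(2) by simp
  qed
  then have "glex_less (insert x (Ustar E indep H - {y})) (Ustar E indep H)"
    using finite_Ustar[OF H] y SW xy by (intro glex_less_exchange) auto
  moreover have "insert x (Ustar E indep H - {y}) \<subseteq> E"
    using x Ustar_subset_ground[OF G] Ustar_subset_ground[OF H] by auto
  ultimately show False
    using Ustar_glex_minimal[OF H] k_cl_Ustar_exchange[OF G S x y H GH SW] by blast
qed

end

section \<open>Consecutive and non-initial subsets, local LYM\<close>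

lemma consecutive_subset_if_Min_eq:
  fixes A B U :: "'a::linorder set"
  assumes A: "consecutive A U" "finite A" "A \<noteq> {}" and B: "consecutive B U" "finite B" "B \<noteq> {}"
    and "Min A = Min B" "Max A \<le> Max B"
  shows "A \<subseteq> B"
proof
  fix z assume z: "z \<in> A"
  show "z \<in> B"
  proof (rule ccontr)
    assume zB: "z \<notin> B"
    have "z \<in> U" using z A unfolding consecutive_def by auto
    moreover have "Min B < z" using assms z zB Min_in[OF B(2,3)] Min_le[OF A(2) z] by (metis order.not_eq_order_implies_strict)
    moreover have "z < Max B" using assms z zB Max_in[OF B(2,3)] Max_ge[OF A(2) z]
      by (metis order.trans order.not_eq_order_implies_strict)
    ultimately show False using B(1) zB Min_in[OF B(2,3)] Max_in[OF B(2,3)] unfolding consecutive_def by blast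
  qed
qed

lemma consecutive_eq_if_Min_eq:
  fixes U :: "'a::linorder set"
  assumes U: "finite U" and V1: "V1 \<in> V_of k U" and V2: "V2 \<in> V_of k U" and "Min V1 = Min V2"
  shows "V1 = V2"
proof -
  have c: "consecutive V1 U" "card V1 = k + 1" "consecutive V2 U" "card V2 = k + 1"
    using V1 V2 unfolding V_of_def by auto
  then have f: "finite V1" "V1 \<noteq> {}" "finite V2" "V2 \<noteq> {}"
    using U unfolding consecutive_def by (auto intro: finite_subset)
  show ?thesis
  proof (cases "Max V1 \<le> Max V2")
    case True
    then have "V1 \<subseteq> V2" using consecutive_subset_if_Min_eq c f assms(4) by blast
    then show ?thesis using c f by (metis card_subset_eq)
  next
    case False
    then have "V2 \<subseteq> V1" using consecutive_subset_if_Min_eq c f assms(4) by (metis nle_le)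
    then show ?thesis using c f by (metis card_subset_eq)
  qed
qed

lemma card_elements_with_k_larger:
  fixes U :: "'a::linorder set"
  assumes U: "finite U"
  shows "card {a\<in>U. k \<le> card {x\<in>U. a < x}} \<le> card U - k"
proof -
  define f where "f a = card {x\<in>U. a < x}" for a
  have antimono: "f b < f a" if "a \<in> U" "b \<in> U" "a < b" for a b
  proof -
    have "{x\<in>U. b < x} \<subset> {x\<in>U. a < x}" using that by auto
    then show ?thesis unfolding f_def using U by (intro psubset_card_mono) auto
  qed
  have "inj_on f U"
    by (rule inj_onI) (metis antimono less_irrefl linorder_neqE)
  moreover have "f ` {a\<in>U. k \<le> f a} \<subseteq> {k..<card U}"
  proof
    fix t assume "t \<in> f ` {a\<in>U. k \<le> f a}"
    then obtain a where a: "a \<in> U" "k \<le> f a" "t = f a" by auto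
    have "f a \<le> card (U - {a})" unfolding f_def using U by (intro card_mono) auto
    also have "\<dots> < card U" using a U by (intro card_Diff1_less)
    finally show "t \<in> {k..<card U}" using a by auto
  qed
  ultimately have "card {a\<in>U. k \<le> f a} \<le> card {k..<card U}"
    by (metis (no_types, lifting) card_inj_on_le finite_atLeastLessThan inj_on_subset mem_Collect_eq subsetI)
  then show ?thesis unfolding f_def by simp
qed

lemma card_V_of_le:
  fixes U :: "'a::linorder set"
  assumes U: "finite U"
  shows "card (V_of k U) \<le> card U - k"
proof -
  have "inj_on Min (V_of k U)" using consecutive_eq_if_Min_eq[OF U] by (intro inj_onI)
  then have "card (V_of k U) = card (Min ` V_of k U)" by (simp add: card_image)
  also have "\<dots> \<le> card {a\<in>U. k \<le> card {x\<in>U. a < x}}"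
  proof (rule card_mono)
    show "finite {a\<in>U. k \<le> card {x\<in>U. a < x}}" using U by simp
    show "Min ` V_of k U \<subseteq> {a\<in>U. k \<le> card {x\<in>U. a < x}}"
    proof
      fix a assume "a \<in> Min ` V_of k U"
      then obtain V where V: "consecutive V U" "card V = k + 1" "a = Min V"
        unfolding V_of_def by auto
      then have sV: "V \<subseteq> U" and fV: "finite V" "V \<noteq> {}"
        unfolding consecutive_def using U by (auto intro: finite_subset)
      then have aV: "a \<in> V" using V by auto
      have "V - {a} \<subseteq> {x\<in>U. a < x}" using sV V fV by (auto simp: order.not_eq_order_implies_strict)
      then have "card (V - {a}) \<le> card {x\<in>U. a < x}" using U by (intro card_mono) auto
      moreover have "card (V - {a}) = k" using aV fV V by simp
      ultimately show "a \<in> {a\<in>U. k \<le> card {x\<in>U. a < x}}" using aV sV by auto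
    qed
  qed
  also have "\<dots> \<le> card U - k" by (rule card_elements_with_k_larger[OF U])
  finally show ?thesis .
qed

definition upper_shadow :: "'a set \<Rightarrow> nat \<Rightarrow> 'a set set \<Rightarrow> 'a set set" where
  "upper_shadow E m \<X> = {W. W \<subseteq> E \<and> card W = Suc m \<and> (\<exists>D\<in>\<X>. D \<subseteq> W)}"

lemma finite_upper_shadow: "finite E \<Longrightarrow> finite (upper_shadow E m \<X>)"
  unfolding upper_shadow_def by (rule finite_subset[of _ "Pow E"]) auto

lemma card_one_point_extensions:
  assumes E: "finite E" and D: "D \<subseteq> E" "card D = m"
  shows "card {W. W \<subseteq> E \<and> card W = Suc m \<and> D \<subseteq> W} = card E - m"
proof -
  have finD: "finite D" using D E finite_subset by blast
  have "{W. W \<subseteq> E \<and> card W = Suc m \<and> D \<subseteq> W} = (\<lambda>e. insert e D) ` (E - D)"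
  proof
    show "(\<lambda>e. insert e D) ` (E - D) \<subseteq> {W. W \<subseteq> E \<and> card W = Suc m \<and> D \<subseteq> W}"
      using D finD by auto
    show "{W. W \<subseteq> E \<and> card W = Suc m \<and> D \<subseteq> W} \<subseteq> (\<lambda>e. insert e D) ` (E - D)"
    proof
      fix W assume W: "W \<in> {W. W \<subseteq> E \<and> card W = Suc m \<and> D \<subseteq> W}"
      then have "card (W - D) = 1" using D finD E by (simp add: card_Diff_subset finite_subset)
      then obtain e where e: "W - D = {e}" by (auto simp: card_Suc_eq)
      then show "W \<in> (\<lambda>e. insert e D) ` (E - D)" using W by (intro image_eqI[of _ _ e]) auto
    qed
  qed
  moreover have "inj_on (\<lambda>e. insert e D) (E - D)" by (intro inj_onI) auto
  ultimately show ?thesis using D finD by (simp add: card_image card_Diff_subset)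
qed

lemma local_LYM:
  assumes E: "finite E" and \<X>: "\<X> \<subseteq> {S. S \<subseteq> E \<and> card S = m}"
  shows "(card E - m) * card \<X> \<le> Suc m * card (upper_shadow E m \<X>)"
proof -
  define \<W> where "\<W> = upper_shadow E m \<X>"
  have fin: "finite \<X>" "finite \<W>"
    using \<X> E finite_subset[of \<X> "Pow E"] finite_upper_shadow unfolding \<W>_def by auto
  have "(card E - m) * card \<X> = (\<Sum>D\<in>\<X>. card {W\<in>\<W>. D \<subseteq> W})"
  proof -
    have "card {W\<in>\<W>. D \<subseteq> W} = card E - m" if "D \<in> \<X>" for D
    proof -
      have "{W\<in>\<W>. D \<subseteq> W} = {W. W \<subseteq> E \<and> card W = Suc m \<and> D \<subseteq> W}"
        unfolding \<W>_def upper_shadow_def using that by auto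
      then show ?thesis using card_one_point_extensions[OF E] that \<X> by auto
    qed
    then show ?thesis by simp
  qed
  also have "\<dots> = card (SIGMA D:\<X>. {W\<in>\<W>. D \<subseteq> W})" using fin by (simp add: card_SigmaI)
  also have "\<dots> = card (SIGMA W:\<W>. {D\<in>\<X>. D \<subseteq> W})"
    by (rule bij_betw_same_card[of "\<lambda>(a, b). (b, a)"]) (auto simp: bij_betw_def inj_on_def)
  also have "\<dots> = (\<Sum>W\<in>\<W>. card {D\<in>\<X>. D \<subseteq> W})" using fin by (simp add: card_SigmaI)
  also have "\<dots> \<le> (\<Sum>W\<in>\<W>. Suc m)"
  proof (rule sum_mono)
    fix W assume W: "W \<in> \<W>"
    then have finW: "finite W" using E finite_subset unfolding \<W>_def upper_shadow_def by blast
    have "card {D\<in>\<X>. D \<subseteq> W} \<le> card {D. D \<subseteq> W \<and> card D = m}"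
      using \<X> finW by (intro card_mono) auto
    also have "\<dots> = Suc m" using W n_subsets[OF finW] unfolding \<W>_def upper_shadow_def by simp
    finally show "card {D\<in>\<X>. D \<subseteq> W} \<le> Suc m" .
  qed
  finally show ?thesis unfolding \<W>_def by (simp add: mult.commute)
qed

definition noninitial_subsets :: "'a::linorder set \<Rightarrow> nat \<Rightarrow> 'a set set" where
  "noninitial_subsets U m = {S. S \<subseteq> U \<and> card S = m \<and> (\<exists>x\<in>U - S. \<exists>y\<in>S. x < y)}"

lemma card_noninitial_subsets:
  fixes U :: "'a::linorder set"
  assumes U: "finite U"
  shows "card U choose m \<le> card (noninitial_subsets U m) + 1"
proof -
  define \<A> where "\<A> = {S. S \<subseteq> U \<and> card S = m}"
  define \<B> where "\<B> = {S\<in>\<A>. \<not> (\<exists>x\<in>U - S. \<exists>y\<in>S. x < y)}"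
  have fin: "finite \<A>" unfolding \<A>_def using U by simp
  have "card \<B> \<le> 1"
  proof (rule card_le_Suc0_iff_eq[THEN iffD2, unfolded One_nat_def[symmetric]])
    show "finite \<B>" using fin unfolding \<B>_def by auto
    show "\<forall>S1\<in>\<B>. \<forall>S2\<in>\<B>. S1 = S2"
    proof (intro ballI, rule ccontr)
      fix S1 S2 assume S: "S1 \<in> \<B>" "S2 \<in> \<B>" "S1 \<noteq> S2"
      then have c: "card S1 = card S2" "finite S1" "finite S2"
        using U unfolding \<B>_def \<A>_def by (auto intro: finite_subset)
      then obtain a b where ab: "a \<in> S1 - S2" "b \<in> S2 - S1"
        using S(3) card_subset_eq by (metis Diff_eq_empty_iff ex_in_conv)
      have "\<not> b < a" "\<not> a < b" using ab S(1,2) unfolding \<B>_def \<A>_def by auto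
      then show False using ab by auto
    qed
  qed
  have "\<A> = noninitial_subsets U m \<union> \<B>" unfolding \<A>_def \<B>_def noninitial_subsets_def by auto
  then have "card \<A> \<le> card (noninitial_subsets U m) + card \<B>" by (simp add: card_Un_le)
  then show ?thesis using \<open>card \<B> \<le> 1\<close> n_subsets[OF U] unfolding \<A>_def by simp
qed

section \<open>Binomial estimates\<close>

lemma choose_ge_linear:
  assumes m: "2 \<le> m" and u: "m + 1 \<le> u"
  shows "(m + 1) * (u - m) \<le> u choose m"
  using u
proof (induction u rule: dec_induct)
  case base
  then show ?case by simp
next
  case (step u)
  obtain m' where m': "m = Suc m'" using m by (cases m) auto
  have "2 * m \<le> m * m" using m by (intro mult_right_mono) auto
  then have "2 * (m + 1) \<le> m * m + m" using m by arith
  then have "m + 1 \<le> Suc m choose 2" by (simp add: choose_two)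
  also have "\<dots> = Suc m choose m'"
    using m' binomial_symmetric[of m' "Suc (Suc m')"] by (simp add: numeral_2_eq_2)
  also have "\<dots> \<le> u choose m'" using step.hyps by (intro binomial_right_mono) simp
  finally have "m + 1 \<le> u choose m'" .
  then have "(m + 1) * (Suc u - m) \<le> (u choose m) + (u choose m')"
    using step.IH step.hyps by (simp add: Suc_diff_le)
  then show ?case using m' by simp
qed

lemma choose_minus_one_ge:
  assumes m: "2 \<le> m" and u: "m + 1 \<le> u" and N: "m + 4 \<le> N"
  shows "(m + 1) * (m + 2) * (u - m) \<le> N * ((u choose m) - 1)"
proof -
  have "m * (u - m) + 1 \<le> (m + 1) * (u - m)" using u by simp
  then have choose: "m * (u - m) \<le> (u choose m) - 1" using choose_ge_linear[OF m u] by linarith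
  have "(m + 1) * (m + 2) \<le> (m + 4) * m" using m by (simp add: algebra_simps)
  also have "\<dots> \<le> N * m" using N by (intro mult_right_mono) auto
  finally have "(m + 1) * (m + 2) * (u - m) \<le> N * (m * (u - m))"
    by (metis mult.assoc mult_le_mono1)
  also have "\<dots> \<le> N * ((u choose m) - 1)" using choose by (intro mult_left_mono) auto
  finally show ?thesis .
qed

lemma choose_two_diff_ge:
  assumes "6 \<le> n" "t < n"
  shows "3 * t \<le> (n choose 2) - ((n - t) choose 2)"
proof -
  obtain b where n: "n = b + 1 + t" using assms(2) by (metis add.commute add_Suc less_imp_Suc_add plus_1_eq_Suc)
  have double: "2 * (x choose 2) = x * (x - 1)" for x :: nat
  proof -
    have "even (x * (x - 1))" by auto
    then show ?thesis by (simp add: choose_two)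
  qed
  have "6 * t \<le> t * (2 * b + 1 + t)" using assms n by (simp add: mult.commute)
  moreover have "(b + 1 + t) * (b + t) = (b + 1) * b + t * (2 * b + 1 + t)" by (simp add: algebra_simps)
  ultimately have "2 * ((b + 1) choose 2) + 6 * t \<le> 2 * (n choose 2)"
    using double[of n] double[of "b + 1"] n by simp
  then show ?thesis using n by simp
qed

lemma card_two_subsets_meeting:
  assumes E: "finite E" and S: "S \<subseteq> E"
  shows "card {W. W \<subseteq> E \<and> card W = 2 \<and> W \<inter> S \<noteq> {}} = (card E choose 2) - ((card E - card S) choose 2)"
proof -
  have "{W. W \<subseteq> E \<and> card W = 2 \<and> W \<inter> S \<noteq> {}}
      = {W. W \<subseteq> E \<and> card W = 2} - {W. W \<subseteq> E - S \<and> card W = 2}" by auto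
  moreover have "card {W. W \<subseteq> E - S \<and> card W = 2} = (card E - card S) choose 2"
    using E S n_subsets[of "E - S" 2] by (simp add: card_Diff_subset finite_subset)
  moreover have "{W. W \<subseteq> E - S \<and> card W = 2} \<subseteq> {W. W \<subseteq> E \<and> card W = 2}" by auto
  ultimately show ?thesis using E n_subsets[OF E, of 2] by (simp add: card_Diff_subset)
qed

lemma times_binomial_eq_binomial_pred:
  assumes "1 \<le> r" "r \<le> n"
  shows "r * (n choose r) = (n - r + 1) * (n choose (r - 1))"
proof -
  have "r * (n choose r) = n * ((n - 1) choose (r - 1))"
    using assms by (intro times_binomial_minus1_eq) simp
  also have "\<dots> = (n - (r - 1)) * (n choose (r - 1))" by (rule binomial_absorb_comp[symmetric])
  also have "n - (r - 1) = n - r + 1" using assms by simp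
  finally show ?thesis .
qed

section \<open>Counting uncovered sets level by level\<close>

context ordered_matroid
begin

lemma Ustar_familyE:
  assumes "U \<in> Ustar_family E indep k"
  obtains F where "flat E indep F" "mrank indep F = k" "U = Ustar E indep F" "k < card U"
  using assms unfolding Ustar_family_def by blast

lemma Ustar_family_subset_ground: "U \<in> Ustar_family E indep k \<Longrightarrow> U \<subseteq> E"
  by (metis Ustar_familyE Ustar_subset_ground)

lemma finite_Ustar_family_member: "U \<in> Ustar_family E indep k \<Longrightarrow> finite U"
  using Ustar_family_subset_ground finite_subset_ground by blast

lemma finite_Ustar_family: "finite (Ustar_family E indep k)"
proof -
  have "Ustar_family E indep k \<subseteq> Pow E" using Ustar_family_subset_ground by blast
  then show ?thesis using finite_ground finite_subset by blast
qed

lemma Ustar_family_eq_if_common_subset: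
  assumes "U1 \<in> Ustar_family E indep m" "U2 \<in> Ustar_family E indep m"
    and "S \<subseteq> U1" "S \<subseteq> U2" "card S = m"
  shows "U1 = U2"
proof -
  obtain G1 where G1: "flat E indep G1" "mrank indep G1 = m" "U1 = Ustar E indep G1"
    using assms(1) by (rule Ustar_familyE)
  obtain G2 where G2: "flat E indep G2" "mrank indep G2 = m" "U2 = Ustar E indep G2"
    using assms(2) by (rule Ustar_familyE)
  have "G1 = mcl E indep S" using Ustar_spans[OF G1(1)] assms G1 by simp
  also have "\<dots> = G2" using Ustar_spans[OF G2(1)] assms G2 by simp
  finally show ?thesis using G1 G2 by simp
qed

lemma card_V_k_le: "card (V_k E indep k) \<le> (\<Sum>U\<in>Ustar_family E indep k. card U - k)"
proof -
  have "card (V_k E indep k) \<le> (\<Sum>U\<in>Ustar_family E indep k. card (V_of k U))"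
    unfolding V_k_def using finite_Ustar_family by (rule card_UN_le)
  also have "\<dots> \<le> (\<Sum>U\<in>Ustar_family E indep k. card U - k)"
    by (intro sum_mono card_V_of_le finite_Ustar_family_member)
  finally show ?thesis .
qed

definition Ustar_family_from :: "nat \<Rightarrow> 'a set set" where
  "Ustar_family_from m = (\<Union>j\<in>{m..<mrank indep E}. Ustar_family E indep j)"

definition level :: "nat \<Rightarrow> 'a set set" where
  "level m = {S. S \<subseteq> E \<and> card S = m}"

definition uncovered :: "nat \<Rightarrow> nat \<Rightarrow> 'a set set" where
  "uncovered m j = {S\<in>level m. \<not> (\<exists>U\<in>Ustar_family_from j. S \<subseteq> U)}"

lemma Ustar_family_fromE:
  assumes "U \<in> Ustar_family_from m"
  obtains F where "flat E indep F" "m \<le> mrank indep F" "U = Ustar E indep F"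
proof -
  obtain j where "m \<le> j" "U \<in> Ustar_family E indep j"
    using assms unfolding Ustar_family_from_def by auto
  then show thesis using that by (auto elim: Ustar_familyE)
qed

lemma finite_level: "finite (level m)"
  unfolding level_def using finite_ground by simp

lemma card_level: "card (level m) = card E choose m"
  unfolding level_def using n_subsets[OF finite_ground] .

lemma finite_uncovered: "finite (uncovered m j)"
  unfolding uncovered_def using finite_level by simp

lemma Ustar_family_from_antimono: "j \<le> j' \<Longrightarrow> Ustar_family_from j' \<subseteq> Ustar_family_from j"
  unfolding Ustar_family_from_def by (rule UN_mono) auto

lemma uncovered_mono: "j \<le> j' \<Longrightarrow> uncovered m j \<subseteq> uncovered m j'"
  unfolding uncovered_def using Ustar_family_from_antimono by blast

lemma upper_shadow_uncovered:
  "upper_shadow E m (uncovered m (Suc m)) \<subseteq> uncovered (Suc m) (Suc m)"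
proof
  fix W assume "W \<in> upper_shadow E m (uncovered m (Suc m))"
  then obtain D where W: "W \<subseteq> E" "card W = Suc m" and D: "D \<in> uncovered m (Suc m)" "D \<subseteq> W"
    unfolding upper_shadow_def by auto
  have "\<not> W \<subseteq> U" if "U \<in> Ustar_family_from (Suc m)" for U
    using D that unfolding uncovered_def by auto
  then show "W \<in> uncovered (Suc m) (Suc m)" using W unfolding uncovered_def level_def by auto
qed

lemma noninitial_subsets_uncovered:
  assumes U: "U \<in> Ustar_family E indep m" and m: "m < mrank indep E"
  shows "noninitial_subsets U m \<subseteq> uncovered m (Suc m) - uncovered m m"
proof
  fix S assume S: "S \<in> noninitial_subsets U m"
  obtain G where G: "flat E indep G" "mrank indep G = m" "U = Ustar E indep G"
    using U by (rule Ustar_familyE)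
  obtain x y where SU: "S \<subseteq> U" "card S = m" and xy: "x \<in> U - S" "y \<in> S" "x < y"
    using S unfolding noninitial_subsets_def by auto
  have "S \<in> level m" unfolding level_def using SU Ustar_family_subset_ground[OF U] by auto
  moreover have "U \<in> Ustar_family_from m" unfolding Ustar_family_from_def using U m by auto
  moreover have "\<not> S \<subseteq> W" if W: "W \<in> Ustar_family_from (Suc m)" for W
  proof -
    obtain H where "flat E indep H" "Suc m \<le> mrank indep H" "W = Ustar E indep H"
      using W by (rule Ustar_family_fromE)
    then show ?thesis using Ustar_exchange[OF G(1), of S x y H] SU xy G by auto
  qed
  ultimately show "S \<in> uncovered m (Suc m) - uncovered m m" unfolding uncovered_def using SU by auto
qed

lemma card_noninitial_subsets_Union:
  "card (\<Union>U\<in>Ustar_family E indep m. noninitial_subsets U m)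
    = (\<Sum>U\<in>Ustar_family E indep m. card (noninitial_subsets U m))"
proof (rule card_UN_disjoint[OF finite_Ustar_family])
  show "\<forall>U\<in>Ustar_family E indep m. finite (noninitial_subsets U m)"
    using finite_Ustar_family_member unfolding noninitial_subsets_def by simp
  show "\<forall>U1\<in>Ustar_family E indep m. \<forall>U2\<in>Ustar_family E indep m. U1 \<noteq> U2 \<longrightarrow>
      noninitial_subsets U1 m \<inter> noninitial_subsets U2 m = {}"
  proof (intro ballI impI)
    fix U1 U2 assume "U1 \<in> Ustar_family E indep m" "U2 \<in> Ustar_family E indep m" "U1 \<noteq> U2"
    then show "noninitial_subsets U1 m \<inter> noninitial_subsets U2 m = {}"
      using Ustar_family_eq_if_common_subset[of U1 m U2] unfolding noninitial_subsets_def by auto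
  qed
qed

lemma card_uncovered_Suc_lower:
  assumes m: "m < mrank indep E"
  shows "card (uncovered m m) + (\<Sum>U\<in>Ustar_family E indep m. (card U choose m) - 1)
    \<le> card (uncovered m (Suc m))"
proof -
  define \<A> where "\<A> = (\<Union>U\<in>Ustar_family E indep m. noninitial_subsets U m)"
  have sum_le: "(\<Sum>U\<in>Ustar_family E indep m. (card U choose m) - 1) \<le> card \<A>"
    unfolding \<A>_def card_noninitial_subsets_Union
  proof (rule sum_mono)
    fix U assume "U \<in> Ustar_family E indep m"
    then have "card U choose m \<le> card (noninitial_subsets U m) + 1"
      by (intro card_noninitial_subsets finite_Ustar_family_member)
    then show "(card U choose m) - 1 \<le> card (noninitial_subsets U m)" by linarith
  qed
  moreover have A: "\<A> \<subseteq> uncovered m (Suc m) - uncovered m m"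
    unfolding \<A>_def using noninitial_subsets_uncovered[OF _ m] by blast
  have "card (uncovered m m) + card \<A> = card (uncovered m m \<union> \<A>)"
    using A finite_uncovered finite_subset[OF A] by (intro card_Un_disjoint[symmetric]) auto
  also have "\<dots> \<le> card (uncovered m (Suc m))"
    using A uncovered_mono[of m "Suc m" m] by (intro card_mono finite_uncovered) auto
  finally show ?thesis using sum_le by linarith
qed

lemma card_uncovered_step:
  assumes m: "2 \<le> m" "Suc m < mrank indep E" and n: "2 * mrank indep E \<le> card E"
    and IH: "(m + 1) * (\<Sum>k<m. card (V_k E indep k)) \<le> card (uncovered m m)"
  shows "(m + 2) * (\<Sum>k<Suc m. card (V_k E indep k)) \<le> card (uncovered (Suc m) (Suc m))"
proof -
  define N where "N = card E - m"
  define P where "P = (\<Sum>k<m. card (V_k E indep k))"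
  define Q where "Q = (\<Sum>U\<in>Ustar_family E indep m. card U - m)"
  define R where "R = (\<Sum>U\<in>Ustar_family E indep m. (card U choose m) - 1)"
  have N: "m + 4 \<le> N" using n m unfolding N_def by linarith
  have "(m + 1) * (m + 2) * Q \<le> N * R"
    unfolding Q_def R_def sum_distrib_left
  proof (rule sum_mono)
    fix U assume "U \<in> Ustar_family E indep m"
    then have "m + 1 \<le> card U" by (auto elim: Ustar_familyE)
    then show "(m + 1) * (m + 2) * (card U - m) \<le> N * ((card U choose m) - 1)"
      using choose_minus_one_ge m(1) N by blast
  qed
  have "(m + 2) * ((m + 1) * P) \<le> N * ((m + 1) * P)" using N by (intro mult_right_mono) auto
  then have "(m + 1) * (m + 2) * P \<le> N * ((m + 1) * P)" by (simp add: algebra_simps)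
  moreover have "N * ((m + 1) * P) \<le> N * card (uncovered m m)"
    using IH unfolding P_def by (rule mult_left_mono) simp
  moreover have "(m + 1) * (m + 2) * card (V_k E indep m) \<le> (m + 1) * (m + 2) * Q"
    using card_V_k_le[of m] unfolding Q_def by (rule mult_left_mono) simp
  ultimately have "(m + 1) * (m + 2) * (P + card (V_k E indep m)) \<le> N * (card (uncovered m m) + R)"
    using \<open>(m + 1) * (m + 2) * Q \<le> N * R\<close> unfolding distrib_left by linarith
  also have "\<dots> \<le> N * card (uncovered m (Suc m))"
    using card_uncovered_Suc_lower m unfolding R_def by simp
  also have "\<dots> \<le> Suc m * card (upper_shadow E m (uncovered m (Suc m)))"
    unfolding N_def by (rule local_LYM[OF finite_ground]) (auto simp: uncovered_def level_def)
  also have "\<dots> \<le> (m + 1) * card (uncovered (Suc m) (Suc m))"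
    using mult_le_mono2[OF card_mono[OF finite_uncovered upper_shadow_uncovered], of "Suc m"] by simp
  finally have "(m + 1) * ((m + 2) * (P + card (V_k E indep m)))
      \<le> (m + 1) * card (uncovered (Suc m) (Suc m))" by (simp only: mult.assoc)
  then have "(m + 2) * (P + card (V_k E indep m)) \<le> card (uncovered (Suc m) (Suc m))"
    by (rule mult_left_le_imp_le) simp
  then show ?thesis unfolding P_def by simp
qed

definition loops :: "'a set set" where
  "loops = {S\<in>level 1. \<not> indep S}"

lemma V_k_0_subset_loops: "V_k E indep 0 \<subseteq> loops"
proof
  fix V assume "V \<in> V_k E indep 0"
  then obtain U where U: "U \<in> Ustar_family E indep 0" "V \<in> V_of 0 U" unfolding V_k_def by auto
  obtain G where G: "flat E indep G" "mrank indep G = 0" "U = Ustar E indep G"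
    using U(1) by (rule Ustar_familyE)
  have V: "V \<subseteq> U" "card V = 1" using U(2) unfolding V_of_def consecutive_def by auto
  then have "V \<subseteq> G" using Ustar_subset_flat[OF G(1)] G by auto
  have "\<not> indep V"
  proof
    assume "indep V"
    then have "card V \<le> mrank indep G" using \<open>V \<subseteq> G\<close> by (rule card_indep_le_rank)
    then show False using G V by simp
  qed
  then show "V \<in> loops" unfolding loops_def level_def using V Ustar_family_subset_ground[OF U(1)] by auto
qed

lemma noninitial_singletons_indep:
  assumes "U \<in> Ustar_family E indep 1" "S \<in> noninitial_subsets U 1"
  shows "indep S"
proof -
  obtain G where "flat E indep G" "mrank indep G = 1" "U = Ustar E indep G"
    using assms(1) by (rule Ustar_familyE)
  then show ?thesis using assms(2) Ustar_small_subsets_indep unfolding noninitial_subsets_def by auto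
qed

lemma loops_uncovered: "loops \<subseteq> uncovered 1 2"
proof
  fix S assume S: "S \<in> loops"
  have "\<not> S \<subseteq> U" if U: "U \<in> Ustar_family_from 2" for U
  proof
    assume "S \<subseteq> U"
    obtain H where "flat E indep H" "2 \<le> mrank indep H" "U = Ustar E indep H"
      using U by (rule Ustar_family_fromE)
    then have "indep S" using \<open>S \<subseteq> U\<close> S Ustar_small_subsets_indep unfolding loops_def level_def by auto
    then show False using S unfolding loops_def by auto
  qed
  then show "S \<in> uncovered 1 2" using S unfolding loops_def uncovered_def by auto
qed

lemma exists_singleton_not_loop_or_noninitial:
  assumes "1 \<le> mrank indep E"
  shows "\<exists>e\<in>E. {e} \<notin> loops \<union> (\<Union>U\<in>Ustar_family E indep 1. noninitial_subsets U 1)"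
proof -
  define C where "C = {x\<in>E. indep {x}}"
  obtain I where I: "I \<subseteq> E" "indep I" "card I = mrank indep E" by (rule rank_attained)
  then have "I \<noteq> {}" using assms by auto
  then obtain x where "x \<in> I" by blast
  then have "x \<in> C" unfolding C_def using I indep_subset by auto
  then have C: "finite C" "C \<noteq> {}" unfolding C_def using finite_ground by auto
  define e where "e = Min C"
  have e: "e \<in> E" "indep {e}" using Min_in[OF C] unfolding e_def C_def by auto
  have "{e} \<notin> noninitial_subsets U 1" if U: "U \<in> Ustar_family E indep 1" for U
  proof
    assume "{e} \<in> noninitial_subsets U 1"
    then obtain x where x: "x \<in> U" "x < e" unfolding noninitial_subsets_def by auto
    obtain G where "flat E indep G" "mrank indep G = 1" "U = Ustar E indep G"
      using U by (rule Ustar_familyE)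
    then have "indep {x}" using x Ustar_small_subsets_indep by auto
    then have "x \<in> C" using x Ustar_family_subset_ground[OF U] unfolding C_def by auto
    then show False using x C unfolding e_def by (meson Min_le not_le)
  qed
  then show ?thesis using e unfolding loops_def by auto
qed

lemma uncovered_points_lower:
  assumes r: "3 \<le> mrank indep E"
  obtains S where "S \<subset> E" "\<And>x. x \<in> S \<Longrightarrow> {x} \<in> uncovered 1 2"
    "(\<Sum>k<2. card (V_k E indep k)) \<le> card S"
proof -
  define \<A> where "\<A> = (\<Union>U\<in>Ustar_family E indep 1. noninitial_subsets U 1)"
  define S where "S = {x. {x} \<in> loops \<union> \<A>}"
  have "\<A> \<subseteq> uncovered 1 2"
    unfolding \<A>_def using noninitial_subsets_uncovered[of _ 1] r by (auto simp: numeral_2_eq_2)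
  then have LA: "loops \<union> \<A> \<subseteq> uncovered 1 2" using loops_uncovered by auto
  then have fin: "finite (loops \<union> \<A>)" using finite_uncovered by (rule finite_subset)
  have "(\<Sum>U\<in>Ustar_family E indep 1. card U - 1) \<le> card \<A>"
    unfolding \<A>_def card_noninitial_subsets_Union
  proof (rule sum_mono)
    fix U assume "U \<in> Ustar_family E indep 1"
    then have "card U choose 1 \<le> card (noninitial_subsets U 1) + 1"
      by (intro card_noninitial_subsets finite_Ustar_family_member)
    then show "card U - 1 \<le> card (noninitial_subsets U 1)" by simp
  qed
  then have "card (V_k E indep 1) \<le> card \<A>" using card_V_k_le[of 1] by linarith
  moreover have "card (V_k E indep 0) \<le> card loops"
    using fin by (intro card_mono V_k_0_subset_loops) auto
  moreover have "loops \<inter> \<A> = {}"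
    using noninitial_singletons_indep unfolding \<A>_def loops_def by blast
  ultimately have "card (V_k E indep 0) + card (V_k E indep 1) \<le> card (loops \<union> \<A>)"
    using card_Un_disjoint[of loops \<A>] fin by simp
  also have "loops \<union> \<A> = (\<lambda>x. {x}) ` S"
  proof
    show "loops \<union> \<A> \<subseteq> (\<lambda>x. {x}) ` S"
    proof
      fix T assume T: "T \<in> loops \<union> \<A>"
      then have "card T = 1" using LA unfolding uncovered_def level_def by auto
      then obtain x where "T = {x}" by (rule card_1_singletonE)
      then show "T \<in> (\<lambda>x. {x}) ` S" using T unfolding S_def by auto
    qed
    show "(\<lambda>x. {x}) ` S \<subseteq> loops \<union> \<A>" unfolding S_def by auto
  qed
  also have "card ((\<lambda>x. {x}) ` S) = card S" by (rule card_image) (simp add: inj_on_def)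
  finally have "(\<Sum>k<2. card (V_k E indep k)) \<le> card S" by (simp add: numeral_2_eq_2)
  moreover have "S \<subseteq> E" using LA unfolding S_def uncovered_def level_def by auto
  moreover have "\<exists>e\<in>E. e \<notin> S"
    using exists_singleton_not_loop_or_noninitial r unfolding S_def \<A>_def by auto
  ultimately show thesis using that LA unfolding S_def by blast
qed

lemma card_uncovered_2_lower:
  assumes r: "3 \<le> mrank indep E" and n: "2 * mrank indep E \<le> card E"
  shows "3 * (\<Sum>k<2. card (V_k E indep k)) \<le> card (uncovered 2 2)"
proof -
  obtain S where SE: "S \<subset> E" and S: "\<And>x. x \<in> S \<Longrightarrow> {x} \<in> uncovered 1 2"
    and t: "(\<Sum>k<2. card (V_k E indep k)) \<le> card S"
    using uncovered_points_lower[OF r] by blast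
  have "card S < card E" using SE by (rule psubset_card_mono[OF finite_ground])
  then have "3 * (\<Sum>k<2. card (V_k E indep k))
      \<le> (card E choose 2) - ((card E - (\<Sum>k<2. card (V_k E indep k))) choose 2)"
    using t n r by (intro choose_two_diff_ge) auto
  also have "\<dots> \<le> (card E choose 2) - ((card E - card S) choose 2)"
    using t by (intro diff_le_mono2 binomial_right_mono) auto
  also have "\<dots> = card {W. W \<subseteq> E \<and> card W = 2 \<and> W \<inter> S \<noteq> {}}"
    using SE by (intro card_two_subsets_meeting[symmetric] finite_ground) auto
  also have "\<dots> \<le> card (upper_shadow E 1 (uncovered 1 2))"
  proof (intro card_mono finite_upper_shadow finite_ground subsetI)
    fix W assume "W \<in> {W. W \<subseteq> E \<and> card W = 2 \<and> W \<inter> S \<noteq> {}}"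
    then obtain x where "W \<subseteq> E" "card W = 2" "x \<in> W" "{x} \<in> uncovered 1 2" using S by auto
    then show "W \<in> upper_shadow E 1 (uncovered 1 2)"
      unfolding upper_shadow_def by (auto simp: numeral_2_eq_2)
  qed
  also have "\<dots> \<le> card (uncovered 2 2)"
    using card_mono[OF finite_uncovered upper_shadow_uncovered[of 1]] by (simp add: numeral_2_eq_2)
  finally show ?thesis .
qed

lemma card_V_k_top_le:
  assumes r: "3 \<le> mrank indep E" and k: "k = mrank indep E - 1"
  shows "mrank indep E * card (V_k E indep k) \<le> card (level k - uncovered k k)"
proof -
  have r': "mrank indep E = k + 1" "2 \<le> k" using r k by auto
  define \<B> where "\<B> = (\<Union>U\<in>Ustar_family E indep k. {S. S \<subseteq> U \<and> card S = k})"
  have "card \<B> = (\<Sum>U\<in>Ustar_family E indep k. card {S. S \<subseteq> U \<and> card S = k})"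
    unfolding \<B>_def
  proof (intro card_UN_disjoint finite_Ustar_family ballI impI)
    fix U assume "U \<in> Ustar_family E indep k"
    then show "finite {S. S \<subseteq> U \<and> card S = k}" using finite_Ustar_family_member by simp
  next
    fix U1 U2 assume "U1 \<in> Ustar_family E indep k" "U2 \<in> Ustar_family E indep k" "U1 \<noteq> U2"
    then show "{S. S \<subseteq> U1 \<and> card S = k} \<inter> {S. S \<subseteq> U2 \<and> card S = k} = {}"
      using Ustar_family_eq_if_common_subset[of U1 k U2] by auto
  qed
  also have "\<dots> = (\<Sum>U\<in>Ustar_family E indep k. card U choose k)"
    using finite_Ustar_family_member n_subsets by (intro sum.cong) auto
  finally have card_\<B>: "card \<B> = (\<Sum>U\<in>Ustar_family E indep k. card U choose k)" .
  have "(k + 1) * card (V_k E indep k) \<le> (\<Sum>U\<in>Ustar_family E indep k. (k + 1) * (card U - k))"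
    using mult_le_mono2[OF card_V_k_le[of k], of "k + 1"] by (simp only: sum_distrib_left)
  also have "\<dots> \<le> card \<B>"
    unfolding card_\<B>
  proof (rule sum_mono)
    fix U assume "U \<in> Ustar_family E indep k"
    then have "k + 1 \<le> card U" by (auto elim: Ustar_familyE)
    then show "(k + 1) * (card U - k) \<le> card U choose k" using choose_ge_linear r' by blast
  qed
  also have "\<dots> \<le> card (level k - uncovered k k)"
  proof (intro card_mono subsetI)
    show "finite (level k - uncovered k k)" using finite_level by simp
    fix S assume "S \<in> \<B>"
    then obtain U where U: "U \<in> Ustar_family E indep k" "S \<subseteq> U" "card S = k" unfolding \<B>_def by auto
    then have "U \<in> Ustar_family_from k" unfolding Ustar_family_from_def using r' by auto
    then show "S \<in> level k - uncovered k k"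
      using U Ustar_family_subset_ground[OF U(1)] unfolding level_def uncovered_def by auto
  qed
  finally show ?thesis using r' by simp
qed

lemma card_uncovered_lower:
  assumes r: "3 \<le> mrank indep E" and n: "2 * mrank indep E \<le> card E"
    and m: "2 \<le> m" "m < mrank indep E"
  shows "(m + 1) * (\<Sum>k<m. card (V_k E indep k)) \<le> card (uncovered m m)"
  using m
proof (induction m rule: dec_induct)
  case base
  then show ?case using card_uncovered_2_lower[OF r n] by simp
next
  case (step m)
  then show ?case using card_uncovered_step[OF step.hyps(1) _ n] by simp
qed

lemma rank_times_card_V_M_le:
  assumes r: "3 \<le> mrank indep E" and n: "2 * mrank indep E \<le> card E"
  shows "mrank indep E * card (V_M E indep) \<le> card E choose (mrank indep E - 1)"
proof -
  define k where "k = mrank indep E - 1"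
  have r': "mrank indep E = Suc k" "2 \<le> k" using r unfolding k_def by auto
  have "card (V_M E indep) \<le> (\<Sum>j<mrank indep E. card (V_k E indep j))"
    unfolding V_M_def by (rule card_UN_le) simp
  also have "\<dots> = (\<Sum>j<k. card (V_k E indep j)) + card (V_k E indep k)" using r' by simp
  finally have "mrank indep E * card (V_M E indep)
      \<le> mrank indep E * ((\<Sum>j<k. card (V_k E indep j)) + card (V_k E indep k))"
    by (rule mult_le_mono2)
  also have "\<dots> = (k + 1) * (\<Sum>j<k. card (V_k E indep j)) + mrank indep E * card (V_k E indep k)"
    using r' by (simp only: distrib_left Suc_eq_plus1)
  also have "\<dots> \<le> card (uncovered k k) + card (level k - uncovered k k)"
    using card_uncovered_lower[OF r n r'(2)] card_V_k_top_le[OF r k_def] r' by (intro add_mono) auto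
  also have "\<dots> = card (level k)"
    using card_Diff_subset[of "uncovered k k" "level k"] card_mono[of "level k" "uncovered k k"]
      finite_uncovered finite_level unfolding uncovered_def by fastforce
  finally show ?thesis unfolding card_level k_def .
qed

end

theorem corollary5p11:
  fixes E :: "'a::linorder set" and indep :: "'a set \<Rightarrow> bool" and n r :: nat
  assumes "matroid E indep"
    and "card E = n"
    and "mrank indep E = r"
    and "r \<ge> 3"
    and "n \<ge> 2 * r"
  shows "real (card (V_M E indep)) \<le> real (n choose r) / real (n - r + 1)"
proof -
  interpret ordered_matroid E indep by unfold_locales (rule assms(1))
  have "r * card (V_M E indep) \<le> n choose (r - 1)"
    using rank_times_card_V_M_le assms by auto
  then have "(n - r + 1) * (r * card (V_M E indep)) \<le> (n - r + 1) * (n choose (r - 1))"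
    by (rule mult_le_mono2)
  also have "\<dots> = r * (n choose r)" using times_binomial_eq_binomial_pred[of r n] assms by simp
  finally have "r * ((n - r + 1) * card (V_M E indep)) \<le> r * (n choose r)" by (simp only: ac_simps)
  then have "(n - r + 1) * card (V_M E indep) \<le> n choose r"
    by (rule mult_left_le_imp_le) (use assms(4) in simp)
  then have "real (n - r + 1) * real (card (V_M E indep)) \<le> real (n choose r)"
    by (metis of_nat_le_iff of_nat_mult)
  then show ?thesis by (simp add: field_simps)
qed

end
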